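(* Let $U\in\mathbb{R}^{d\times n}$ be a frame, $z\in\mathbb{R}^n_{++}$, $c\in\mathbb{R}^n_{++}$ with $\langle c,1_n\rangle=d$, let $\emptyset\ne T\subsetneq[n]$, and let $h:=h^{U,z}_T$. Then: (1) $h$ is an increasing function of $\alpha$; (2) $\lim_{\alpha\to\infty}h(\alpha)=\operatorname{rk}(U_T)$; (3) $\langle c,1_T\rangle-h(1)\ge\gamma$, where $\gamma$ is the margin of $T$; (4) if $\operatorname{rk}(U_T)\ge\langle c,1_T\rangle$, then for the margin $\gamma$ of $T$ and any $\delta\in[0,\gamma)$, there is a finite solution $\alpha<\infty$ (with $\alpha\ge1$) to the equation $h(\alpha)=h(1)+\delta$.
   Context: A frame is a full row rank matrix $U=(u_1,\dots,u_n)\in\mathbb{R}^{d\times n}$; $U_T,Z_T$ denote restrictions to $T$, $\bar T=[n]\setminus T$, $Z=\mathrm{diag}(z)$, $1_T$ the indicator of $T$, $\circ$ the entrywise product. $\mathrm{lev}^U_j(z):=z_ju_j^{\mathsf T}(UZU^{\mathsf T})^{-1}u_j$. Margin of $T$: the largest $\gamma\ge0$ such that some $\nu\in\mathbb{R}$ satisfies $\max_{j\in T}(\mathrm{lev}^U_j(z)-c_j)\le\nu-\gamma\le\nu+\gamma\le\min_{j\notin T}(\mathrm{lev}^U_j(z)-c_j)$. Progress function: $h^{U,z}_T(\alpha):=\sum_{j\in T}\mathrm{lev}^U_j(z\circ(1_{\bar T}+\alpha1_T))=\mathrm{tr}[\alpha U_TZ_TU_T^{\mathsf T}(U_{\bar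 T}Z_{\bar T}U_{\bar T}^{\mathsf T}+\alpha U_TZ_TU_T^{\mathsf T})^{-1}]$ for $\alpha>0$. *)

theory Defs
  imports "HOL-Analysis.Analysis"
begin

text \<open>Matrices U :: real^'n^'d are d x n (rows indexed by 'd, columns by 'n).\<close>

definition diag_mat :: "real^'n \<Rightarrow> real^'n^'n" where
  "diag_mat z = (\<chi> i j. if i = j then z $ i else 0)"

definition is_frame :: "real^'n^'d \<Rightarrow> bool" where
  "is_frame U \<longleftrightarrow> rank U = CARD('d)"

text \<open>Restriction U_T, represented by zeroing the columns outside T (same rank).\<close>
definition restrict_cols :: "real^'n^'d \<Rightarrow> 'n set \<Rightarrow> real^'n^'d" where
  "restrict_cols U T = (\<chi> i j. if j \<in> T then U $ i $ j else 0)"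

definition ind_vec :: "'n set \<Rightarrow> real^'n" where
  "ind_vec T = (\<chi> j. if j \<in> T then 1 else 0)"

definition lev :: "real^'n^'d \<Rightarrow> real^'n \<Rightarrow> 'n \<Rightarrow> real" where
  "lev U z j = z $ j * (column j U \<bullet>
      (matrix_inv (U ** diag_mat z ** transpose U) *v column j U))"

definition progress :: "real^'n^'d \<Rightarrow> real^'n \<Rightarrow> 'n set \<Rightarrow> real \<Rightarrow> real" where
  "progress U z T \<alpha> =
     (\<Sum>j\<in>T. lev U (\<chi> k. z $ k * (ind_vec (- T) $ k + \<alpha> * ind_vec T $ k)) j)"

definition margin_feasible :: "real^'n^'d \<Rightarrow> real^'n \<Rightarrow> real^'n \<Rightarrow> 'n set \<Rightarrow> real \<Rightarrow> bool" where
  "margin_feasible U z c T \<gamma> \<longleftrightarrow> \<gamma> \<ge> 0 \<and>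
     (\<exists>\<nu>. Max ((\<lambda>j. lev U z j - c $ j) ` T) \<le> \<nu> - \<gamma> \<and> \<nu> - \<gamma> \<le> \<nu> + \<gamma> \<and>
          \<nu> + \<gamma> \<le> Min ((\<lambda>j. lev U z j - c $ j) ` (- T)))"

definition is_margin :: "real^'n^'d \<Rightarrow> real^'n \<Rightarrow> real^'n \<Rightarrow> 'n set \<Rightarrow> real \<Rightarrow> bool" where
  "is_margin U z c T \<gamma> \<longleftrightarrow> margin_feasible U z c T \<gamma> \<and>
     (\<forall>\<gamma>'. margin_feasible U z c T \<gamma>' \<longrightarrow> \<gamma>' \<le> \<gamma>)"

end

theory Submission
  imports Defs "HOL-Real_Asymp.Real_Asymp"
begin

text \<open>Write \<open>M(w) = U diag(w) U\<^sup>T\<close>, and \<open>M\<^sub>\<alpha>\<close> for \<open>M(w)\<close> at the weights \<open>w\<close> obtained from \<open>z\<close>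
  by multiplying the entries in \<open>T\<close> by \<open>\<alpha>\<close>.
  The leverages at any positive weights sum to \<open>tr(M(w)\<^sup>-\<^sup>1 M(w)) = d\<close>, so \<open>h(\<alpha>) = d - g(\<alpha>)\<close>
  with \<open>g(\<alpha>) = \<Sum>\<^sub>j\<^sub>\<notin>\<^sub>T z\<^sub>j u\<^sub>j\<^sup>T M\<^sub>\<alpha>\<^sup>-\<^sup>1 u\<^sub>j\<close>. For \<open>\<alpha> \<le> \<beta>\<close> we have
  \<open>M\<^sub>\<alpha> \<le> M\<^sub>\<beta> \<le> (\<beta>/\<alpha>) M\<^sub>\<alpha>\<close> in the Loewner order, and inversion reverses this, so \<open>g\<close> is
  antitone with \<open>(\<alpha>/\<beta>) g(\<alpha>) \<le> g(\<beta>)\<close>: \<open>h\<close> is increasing and Lipschitz on \<open>[1,\<infinity>)\<close>.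

  For the limit, \<open>g(\<alpha>) = tr(M\<^sub>\<alpha>\<^sup>-\<^sup>1 A)\<close> with \<open>A = \<Sum>\<^sub>j\<^sub>\<notin>\<^sub>T z\<^sub>j u\<^sub>j u\<^sub>j\<^sup>T\<close>; compute the trace in an
  orthonormal basis adapted to \<open>V = range U\<^sub>T\<close>. On \<open>V\<^sup>\<bottom>\<close> the matrices \<open>A\<close> and \<open>M\<^sub>\<alpha>\<close> agree, so
  each basis vector there contributes exactly 1, while \<open>x\<^sup>T M\<^sub>\<alpha>\<^sup>-\<^sup>1 x = O(1/\<alpha>)\<close> for \<open>x \<in> V\<close>
  and Cauchy-Schwarz make the contributions from \<open>V\<close> vanish like \<open>\<alpha>\<^sup>-\<^sup>1\<^sup>/\<^sup>2\<close>. Hence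
  \<open>h \<rightarrow> d - dim V\<^sup>\<bottom> = rk U\<^sub>T\<close>. The margin bound holds because the numbers \<open>lev\<^sub>j - c\<^sub>j\<close> sum
  to zero and are separated by a gap \<open>2\<gamma>\<close> between \<open>T\<close> and its complement; the last claim is the
  intermediate value theorem.\<close>

section \<open>Positive definite matrices\<close>

locale positive_definite =
  fixes M :: "real^'d^'d"
  assumes invertible: "invertible M"
    and symmetric: "(M *v x) \<bullet> y = x \<bullet> (M *v y)"
    and nonneg: "0 \<le> x \<bullet> (M *v x)"
begin

lemma mult_inverse_cancel: "M *v (matrix_inv M *v x) = x"
  and inverse_mult_cancel: "matrix_inv M *v (M *v x) = x"
proof -
  have "M ** matrix_inv M = mat 1 \<and> matrix_inv M ** M = mat 1"
    using invertible unfolding matrix_inv_def invertible_def by (rule someI_ex)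
  then show "M *v (matrix_inv M *v x) = x" "matrix_inv M *v (M *v x) = x"
    by (simp_all add: matrix_vector_mul_assoc)
qed

lemma inverse_symmetric: "(matrix_inv M *v x) \<bullet> y = x \<bullet> (matrix_inv M *v y)"
  by (metis symmetric mult_inverse_cancel)

lemma inverse_quadratic_eq:
  "x \<bullet> (matrix_inv M *v x) = (matrix_inv M *v x) \<bullet> (M *v (matrix_inv M *v x))"
  by (simp add: mult_inverse_cancel inner_commute)

lemma inverse_nonneg: "0 \<le> x \<bullet> (matrix_inv M *v x)"
  unfolding inverse_quadratic_eq by (rule nonneg)

text \<open>The two halves of the variational formula
  \<open>x \<bullet> M\<^sup>-\<^sup>1 x = max\<^sub>y (2 (x \<bullet> y) - y \<bullet> M y)\<close>, the maximum being attained at \<open>y = M\<^sup>-\<^sup>1 x\<close>.\<close>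

lemma inverse_quadratic_ge: "2 * (x \<bullet> y) - y \<bullet> (M *v y) \<le> x \<bullet> (matrix_inv M *v x)"
proof -
  define p where "p = matrix_inv M *v x"
  have "0 \<le> (y - p) \<bullet> (M *v (y - p))"
    by (rule nonneg)
  also have "\<dots> = y \<bullet> (M *v y) - 2 * (x \<bullet> y) + x \<bullet> p"
    by (simp add: matrix_vector_mult_diff_distrib inner_diff_left inner_diff_right p_def
        mult_inverse_cancel symmetric[of _ y] inner_commute[of y x])
       (simp add: symmetric mult_inverse_cancel inner_commute)
  finally show ?thesis by (simp add: p_def)
qed

lemma inverse_quadratic_le:
  assumes "\<And>y. 2 * (x \<bullet> y) - y \<bullet> (M *v y) \<le> C"
  shows "x \<bullet> (matrix_inv M *v x) \<le> C"
  using assms[of "matrix_inv M *v x"] by (simp add: inverse_quadratic_eq[symmetric])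

lemma inverse_bilinear_abs_le:
  assumes "t > 0"
  shows "2 * t * \<bar>(matrix_inv M *v x) \<bullet> y\<bar>
    \<le> t\<^sup>2 * (x \<bullet> (matrix_inv M *v x)) + y \<bullet> (matrix_inv M *v y)"
proof -
  have expand: "(t *\<^sub>R x + s *\<^sub>R y) \<bullet> (matrix_inv M *v (t *\<^sub>R x + s *\<^sub>R y))
     = t\<^sup>2 * (x \<bullet> (matrix_inv M *v x)) + 2 * t * s * ((matrix_inv M *v x) \<bullet> y)
       + s\<^sup>2 * (y \<bullet> (matrix_inv M *v y))" for s
    by (simp add: matrix_vector_right_distrib matrix_vector_mult_scaleR inner_add_left
        inner_add_right inverse_symmetric[of y x] inner_commute[of x "matrix_inv M *v y"]
        inner_commute[of y "matrix_inv M *v x"] power2_eq_square algebra_simps)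
  show ?thesis
    using inverse_nonneg[of "t *\<^sub>R x + 1 *\<^sub>R y"] inverse_nonneg[of "t *\<^sub>R x + (-1) *\<^sub>R y"]
      expand[of 1] expand[of "-1"] assms
    by (simp add: abs_if)
qed

end

lemma positive_definite_inverse_le_scaled:
  assumes M1: "positive_definite M1" and M2: "positive_definite M2" and "k > 0"
    and le: "\<And>y. y \<bullet> (M2 *v y) \<le> k * (y \<bullet> (M1 *v y))"
  shows "x \<bullet> (matrix_inv M1 *v x) \<le> k * (x \<bullet> (matrix_inv M2 *v x))"
proof -
  define q where "q = x \<bullet> (matrix_inv M1 *v x)"
  define y where "y = (1 / k) *\<^sub>R (matrix_inv M1 *v x)"
  have "y \<bullet> (M2 *v y) \<le> k * (y \<bullet> (M1 *v y))"
    by (rule le)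
  also have "\<dots> = q / k"
    using \<open>k > 0\<close> by (simp add: y_def q_def matrix_vector_mult_scaleR
        positive_definite.mult_inverse_cancel[OF M1] inner_commute power2_eq_square)
  finally have "2 * (x \<bullet> y) - q / k \<le> x \<bullet> (matrix_inv M2 *v x)"
    using positive_definite.inverse_quadratic_ge[OF M2, of x y] by linarith
  moreover have "x \<bullet> y = q / k"
    by (simp add: y_def q_def)
  ultimately show ?thesis
    using \<open>k > 0\<close> by (simp add: q_def field_simps)
qed

section \<open>Weighted Gram matrices and leverage scores\<close>

definition weighted_gram :: "real^'n^'d \<Rightarrow> real^'n \<Rightarrow> real^'d^'d" where
  "weighted_gram U w = U ** diag_mat w ** transpose U"

lemma weighted_gram_mult_vec:
  "weighted_gram U w *v x = (\<Sum>j\<in>UNIV. (w$j * (column j U \<bullet> x)) *\<^sub>R column j U)"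
  unfolding vec_eq_iff
  by (simp add: weighted_gram_def matrix_vector_mult_def matrix_matrix_mult_def diag_mat_def
      transpose_def column_def inner_vec_def sum_distrib_left sum_distrib_right if_distrib
      cong: if_cong, subst sum.swap, simp add: ac_simps)

lemma inner_weighted_gram:
  "y \<bullet> (weighted_gram U w *v x) = (\<Sum>j\<in>UNIV. w$j * (column j U \<bullet> x) * (column j U \<bullet> y))"
  by (simp add: weighted_gram_mult_vec inner_sum_right inner_commute)

lemma quadratic_weighted_gram:
  "x \<bullet> (weighted_gram U w *v x) = (\<Sum>j\<in>UNIV. w$j * (column j U \<bullet> x)\<^sup>2)"
  by (simp add: inner_weighted_gram power2_eq_square mult.assoc)

lemma weighted_gram_positive_definite:
  assumes surj: "surj ((*v) U)" and wpos: "\<forall>j. w$j > 0"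
  shows "positive_definite (weighted_gram U w)"
proof
  show "(weighted_gram U w *v x) \<bullet> y = x \<bullet> (weighted_gram U w *v y)" for x y
    by (simp add: inner_weighted_gram inner_commute[of _ y] mult_ac)
  show "0 \<le> x \<bullet> (weighted_gram U w *v x)" for x
    unfolding quadratic_weighted_gram using wpos by (intro sum_nonneg) (simp add: less_imp_le)
  have "x = 0" if "weighted_gram U w *v x = 0" for x
  proof -
    have "(\<Sum>j\<in>UNIV. w$j * (column j U \<bullet> x)\<^sup>2) = 0"
      using that by (simp add: quadratic_weighted_gram[symmetric])
    then have "\<forall>j\<in>UNIV. w$j * (column j U \<bullet> x)\<^sup>2 = 0"
      using wpos by (subst sum_nonneg_eq_0_iff[symmetric]) (auto simp: less_imp_le)
    then have orth: "column j U \<bullet> x = 0" for j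
      using wpos by (metis UNIV_I mult_eq_0_iff power_eq_0_iff less_irrefl)
    obtain y where y: "x = U *v y"
      using surj by (metis surjD)
    have "x \<bullet> x = (\<Sum>j\<in>UNIV. y$j * (x \<bullet> column j U))"
      by (subst (2) y) (simp add: matrix_mult_sum inner_sum_right scalar_mult_eq_scaleR)
    also have "\<dots> = 0"
      using orth by (simp add: inner_commute)
    finally show "x = 0" by simp
  qed
  then show "invertible (weighted_gram U w)"
    unfolding invertible_left_inverse matrix_left_invertible_ker by blast
qed

lemma lev_weighted_gram:
  "lev U w j = w$j * (column j U \<bullet> (matrix_inv (weighted_gram U w) *v column j U))"
  by (simp add: lev_def weighted_gram_def)

text \<open>The trace of \<open>P U diag(c) U\<^sup>T\<close>, computed once along the columns of \<open>U\<close>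
  and once in an orthonormal basis \<open>E\<close>.\<close>

lemma sum_columns_eq_trace:
  assumes "finite E" and expand: "\<And>x. (\<Sum>b\<in>E. (x \<bullet> b) *\<^sub>R b) = x"
    and sym: "\<And>x y. (P *v x) \<bullet> y = x \<bullet> (P *v y)"
  shows "(\<Sum>j\<in>UNIV. c$j * (column j U \<bullet> (P *v column j U)))
    = (\<Sum>b\<in>E. (P *v b) \<bullet> (weighted_gram U c *v b))"
proof -
  have "u \<bullet> (P *v u) = (\<Sum>b\<in>E. (u \<bullet> b) * ((P *v b) \<bullet> u))" for u
  proof -
    have "u \<bullet> (P *v u) = (\<Sum>b\<in>E. (u \<bullet> b) *\<^sub>R b) \<bullet> (P *v u)"
      by (simp add: expand)
    then show ?thesis
      by (simp add: inner_sum_left sym)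
  qed
  then have "(\<Sum>j\<in>UNIV. c$j * (column j U \<bullet> (P *v column j U)))
      = (\<Sum>j\<in>UNIV. \<Sum>b\<in>E. c$j * ((column j U \<bullet> b) * ((P *v b) \<bullet> column j U)))"
    by (simp add: sum_distrib_left)
  also have "\<dots> = (\<Sum>b\<in>E. \<Sum>j\<in>UNIV. c$j * ((column j U \<bullet> b) * ((P *v b) \<bullet> column j U)))"
    by (rule sum.swap)
  also have "\<dots> = (\<Sum>b\<in>E. (P *v b) \<bullet> (weighted_gram U c *v b))"
    by (simp add: weighted_gram_mult_vec inner_sum_right inner_commute mult_ac)
  finally show ?thesis .
qed

lemma sum_lev:
  fixes U :: "real^'n^'d"
  assumes "surj ((*v) U)" and "\<forall>j. w$j > 0"
  shows "(\<Sum>j\<in>UNIV. lev U w j) = real CARD('d)"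
proof -
  interpret positive_definite "weighted_gram U w"
    using assms by (rule weighted_gram_positive_definite)
  have "(\<Sum>j\<in>UNIV. lev U w j)
      = (\<Sum>b\<in>Basis. (matrix_inv (weighted_gram U w) *v b) \<bullet> (weighted_gram U w *v b))"
    unfolding lev_weighted_gram
    by (rule sum_columns_eq_trace)
       (auto simp: euclidean_representation inner_Basis inverse_symmetric)
  also have "\<dots> = (\<Sum>b\<in>(Basis :: (real^'d) set). 1)"
    by (intro sum.cong) (auto simp: inverse_symmetric inverse_mult_cancel inner_Basis)
  finally show ?thesis by simp
qed

section \<open>Orthonormal bases adapted to a subspace\<close>

lemma dim_orthogonal_comp:
  fixes V :: "'a::euclidean_space set"
  assumes "subspace V"
  shows "dim (orthogonal_comp V) + dim V = DIM('a)"
  using dim_subspace_orthogonal_to_vectors[OF assms subspace_UNIV]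
  by (simp add: orthogonal_comp_def)

lemma orthonormal_basis_adapted:
  fixes V :: "'a::euclidean_space set"
  assumes V: "subspace V"
  obtains B C where "finite B" "finite C" "B \<inter> C = {}" "B \<subseteq> V" "C \<subseteq> orthogonal_comp V"
    "card C = dim (orthogonal_comp V)" "\<And>b. b \<in> C \<Longrightarrow> b \<bullet> b = 1"
    "\<And>x. (\<Sum>b\<in>B \<union> C. (x \<bullet> b) *\<^sub>R b) = x"
proof -
  obtain B where B: "B \<subseteq> V" "pairwise orthogonal B" "\<And>b. b \<in> B \<Longrightarrow> norm b = 1"
    "independent B" "span B = V"
    using orthonormal_basis_subspace[OF V] by metis
  obtain C where C: "C \<subseteq> orthogonal_comp V" "pairwise orthogonal C" "\<And>b. b \<in> C \<Longrightarrow> norm b = 1"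
    "independent C" "card C = dim (orthogonal_comp V)" "span C = orthogonal_comp V"
    using orthonormal_basis_subspace[OF subspace_orthogonal_comp] by metis
  have fin: "finite B" "finite C"
    using B(4) C(4) independent_imp_finite by auto
  have BC: "b \<bullet> c = 0" if "b \<in> B" "c \<in> C" for b c
    using that B(1) C(1) by (auto simp: orthogonal_comp_def orthogonal_def)
  have disj: "B \<inter> C = {}"
    using BC B(3) by (fastforce simp: norm_eq_1)
  have "(\<Sum>b\<in>B \<union> C. (x \<bullet> b) *\<^sub>R b) = x" for x
  proof (rule orthonormal_basis_expand)
    show "pairwise orthogonal (B \<union> C)"
    proof (rule pairwiseI)
      fix b c assume "b \<in> B \<union> C" "c \<in> B \<union> C" "b \<noteq> c"
      then show "orthogonal b c"
        using B(2) C(2) BC[of b c] BC[of c b]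
        by (auto simp: pairwise_def orthogonal_def inner_commute[of c b])
    qed
    obtain v w where "v \<in> V" "w \<in> orthogonal_comp V" "x = v + w"
      using subspace_sum_orthogonal_comp[OF V] by (metis UNIV_I set_plus_elim)
    moreover have "V \<subseteq> span (B \<union> C)" "orthogonal_comp V \<subseteq> span (B \<union> C)"
      using B(5) C(6) span_mono[of B "B \<union> C"] span_mono[of C "B \<union> C"] by auto
    ultimately show "x \<in> span (B \<union> C)"
      by (metis span_add subsetD)
  qed (use B(3) C(3) fin in auto)
  then show thesis
    using that fin disj B(1) C(1,5) C(3) by (simp add: norm_eq_1)
qed

section \<open>The progress function\<close>

lemma restrict_cols_mult_vec: "restrict_cols U T *v c = (\<Sum>j\<in>T. c$j *\<^sub>R column j U)"
proof -
  have "restrict_cols U T *v c = (\<Sum>j\<in>UNIV. c$j *s column j (restrict_cols U T))"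
    by (rule matrix_mult_sum)
  also have "\<dots> = (\<Sum>j\<in>UNIV. if j \<in> T then c$j *\<^sub>R column j U else 0)"
    by (intro sum.cong) (auto simp: column_def restrict_cols_def vec_eq_iff scalar_mult_eq_scaleR)
  finally show ?thesis
    by (simp add: sum.If_cases)
qed

lemma column_in_range_restrict_cols:
  assumes "j \<in> T"
  shows "column j U \<in> range ((*v) (restrict_cols U T))"
proof -
  have "(\<Sum>k\<in>T. axis j 1 $ k *\<^sub>R column k U) = (\<Sum>k\<in>T. if k = j then column k U else 0)"
    by (intro sum.cong) (auto simp: axis_def)
  then have "restrict_cols U T *v axis j 1 = column j U"
    using assms by (simp add: restrict_cols_mult_vec)
  then show ?thesis
    by (metis rangeI)
qed

definition scale_on :: "'n set \<Rightarrow> real \<Rightarrow> real^'n \<Rightarrow> real^'n" where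
  "scale_on T \<alpha> z = (\<chi> k. if k \<in> T then \<alpha> * z$k else z$k)"

lemma scale_on_1 [simp]: "scale_on T 1 z = z"
  by (simp add: scale_on_def vec_eq_iff)

lemma progress_eq_sum_lev: "progress U z T \<alpha> = (\<Sum>j\<in>T. lev U (scale_on T \<alpha> z) j)"
proof -
  have "(\<chi> k. z$k * (ind_vec (- T) $ k + \<alpha> * ind_vec T $ k)) = scale_on T \<alpha> z"
    by (simp add: vec_eq_iff scale_on_def ind_vec_def)
  then show ?thesis
    by (simp add: progress_def)
qed

definition complement_progress :: "real^'n^'d \<Rightarrow> real^'n \<Rightarrow> 'n set \<Rightarrow> real \<Rightarrow> real" where
  "complement_progress U z T \<alpha> = (\<Sum>j\<in>-T. lev U (scale_on T \<alpha> z) j)"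

context
  fixes U :: "real^'n^'d" and z :: "real^'n" and T :: "'n set"
  assumes surj: "surj ((*v) U)" and zpos: "\<forall>j. z$j > 0"
begin

abbreviation gram :: "real \<Rightarrow> real^'d^'d" where
  "gram \<alpha> \<equiv> weighted_gram U (scale_on T \<alpha> z)"

abbreviation inv_form :: "real \<Rightarrow> real^'d \<Rightarrow> real" where
  "inv_form \<alpha> x \<equiv> x \<bullet> (matrix_inv (gram \<alpha>) *v x)"

abbreviation range_T :: "(real^'d) set" where
  "range_T \<equiv> range ((*v) (restrict_cols U T))"

text \<open>\<open>gram 0 = \<Sum>\<^sub>j\<^sub>\<notin>\<^sub>T z\<^sub>j u\<^sub>j u\<^sub>j\<^sup>T\<close>: the columns in \<open>T\<close> get weight 0.\<close>

abbreviation trace_term :: "real \<Rightarrow> real^'d \<Rightarrow> real" where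
  "trace_term \<alpha> b \<equiv> (matrix_inv (gram \<alpha>) *v b) \<bullet> (gram 0 *v b)"

lemma subspace_range_T: "subspace range_T"
  by (intro linear_subspace_image) auto

lemma positive_definite_scale_on:
  "\<alpha> > 0 \<Longrightarrow> positive_definite (gram \<alpha>)"
  using zpos by (intro weighted_gram_positive_definite[OF surj]) (simp add: scale_on_def)

lemma progress_add_complement:
  assumes "\<alpha> > 0"
  shows "progress U z T \<alpha> + complement_progress U z T \<alpha> = real CARD('d)"
proof -
  have "\<forall>j. scale_on T \<alpha> z $ j > 0"
    using assms zpos by (simp add: scale_on_def)
  then have "(\<Sum>j\<in>UNIV. lev U (scale_on T \<alpha> z) j) = real CARD('d)"
    by (rule sum_lev[OF surj])
  moreover have "(\<Sum>j\<in>UNIV. lev U (scale_on T \<alpha> z) j)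
      = (\<Sum>j\<in>T. lev U (scale_on T \<alpha> z) j) + (\<Sum>j\<in>-T. lev U (scale_on T \<alpha> z) j)"
    by (subst sum.union_disjoint[symmetric]) (auto simp: Compl_partition)
  ultimately show ?thesis
    by (simp add: progress_eq_sum_lev complement_progress_def)
qed

lemma complement_progress_eq:
  "complement_progress U z T \<alpha> = (\<Sum>j\<in>-T. z$j * inv_form \<alpha> (column j U))"
  by (simp add: complement_progress_def lev_weighted_gram scale_on_def)

lemma inv_form_antimono:
  assumes "0 < \<alpha>" "\<alpha> \<le> \<beta>"
  shows "inv_form \<beta> x \<le> inv_form \<alpha> x"
proof -
  have "y \<bullet> (gram \<alpha> *v y) \<le> 1 * (y \<bullet> (gram \<beta> *v y))" for y
    unfolding quadratic_weighted_gram mult_1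
    by (intro sum_mono mult_right_mono) (use assms zpos in \<open>auto simp: scale_on_def less_imp_le\<close>)
  with assms show ?thesis
    using positive_definite_inverse_le_scaled[OF positive_definite_scale_on[of \<beta>]
        positive_definite_scale_on[of \<alpha>], of 1] by simp
qed

lemma inv_form_le_scaled:
  assumes "0 < \<alpha>" "\<alpha> \<le> \<beta>"
  shows "inv_form \<alpha> x \<le> \<beta> / \<alpha> * inv_form \<beta> x"
proof -
  have weights: "scale_on T \<beta> z $ j \<le> \<beta> / \<alpha> * scale_on T \<alpha> z $ j" for j
    using assms zpos[rule_format, of j] by (simp add: scale_on_def field_simps)
  have "y \<bullet> (gram \<beta> *v y) \<le> \<beta> / \<alpha> * (y \<bullet> (gram \<alpha> *v y))" for y
  proof -
    have "y \<bullet> (gram \<beta> *v y)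
        \<le> (\<Sum>j\<in>UNIV. (\<beta> / \<alpha> * scale_on T \<alpha> z $ j) * (column j U \<bullet> y)\<^sup>2)"
      unfolding quadratic_weighted_gram by (intro sum_mono mult_right_mono weights) simp
    also have "\<dots> = \<beta> / \<alpha> * (y \<bullet> (gram \<alpha> *v y))"
      by (simp add: quadratic_weighted_gram sum_distrib_left mult.assoc)
    finally show ?thesis .
  qed
  with assms show ?thesis
    using positive_definite_inverse_le_scaled[OF positive_definite_scale_on[of \<alpha>]
        positive_definite_scale_on[of \<beta>], of "\<beta> / \<alpha>"] by simp
qed

lemma complement_progress_nonneg: "\<alpha> > 0 \<Longrightarrow> 0 \<le> complement_progress U z T \<alpha>"
  unfolding complement_progress_eq using zpos
  by (intro sum_nonneg mult_nonneg_nonneg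
      positive_definite.inverse_nonneg[OF positive_definite_scale_on]) (auto simp: less_imp_le)

lemma complement_progress_antimono:
  "0 < \<alpha> \<Longrightarrow> \<alpha> \<le> \<beta> \<Longrightarrow> complement_progress U z T \<beta> \<le> complement_progress U z T \<alpha>"
  unfolding complement_progress_eq using zpos inv_form_antimono
  by (intro sum_mono mult_left_mono) (auto simp: less_imp_le)

lemma complement_progress_le_scaled:
  assumes "0 < \<alpha>" "\<alpha> \<le> \<beta>"
  shows "complement_progress U z T \<alpha> \<le> \<beta> / \<alpha> * complement_progress U z T \<beta>"
  unfolding complement_progress_eq sum_distrib_left
proof (rule sum_mono)
  fix j
  have "z$j * inv_form \<alpha> (column j U) \<le> z$j * (\<beta> / \<alpha> * inv_form \<beta> (column j U))"
    using assms zpos by (intro mult_left_mono inv_form_le_scaled) (auto simp: less_imp_le)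
  then show "z$j * inv_form \<alpha> (column j U) \<le> \<beta> / \<alpha> * (z$j * inv_form \<beta> (column j U))"
    by (simp add: mult.left_commute)
qed

lemma complement_progress_lipschitz:
  "(complement_progress U z T 1)-lipschitz_on {1..} (complement_progress U z T)"
proof (rule lipschitz_onI)
  let ?\<phi> = "complement_progress U z T"
  have diff_le: "\<bar>?\<phi> \<alpha> - ?\<phi> \<beta>\<bar> \<le> ?\<phi> 1 * (\<beta> - \<alpha>)" if "1 \<le> \<alpha>" "\<alpha> \<le> \<beta>" for \<alpha> \<beta>
  proof -
    have "0 \<le> ?\<phi> \<alpha> - ?\<phi> \<beta>"
      using complement_progress_antimono[of \<alpha> \<beta>] that by linarith
    moreover have "?\<phi> \<alpha> \<le> \<beta> / \<alpha> * ?\<phi> \<beta>"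
      using complement_progress_le_scaled[of \<alpha> \<beta>] that by linarith
    moreover have "\<beta> / \<alpha> * ?\<phi> \<beta> - ?\<phi> \<beta> = (\<beta> - \<alpha>) / \<alpha> * ?\<phi> \<beta>"
      using that by (simp add: field_simps)
    moreover have "(\<beta> - \<alpha>) / \<alpha> \<le> \<beta> - \<alpha>"
      using that
      by (simp add: divide_le_eq) (metis diff_ge_0_iff_ge mult.right_neutral mult_left_mono)
    then have "(\<beta> - \<alpha>) / \<alpha> * ?\<phi> \<beta> \<le> (\<beta> - \<alpha>) * ?\<phi> 1"
      using that complement_progress_nonneg[of \<beta>] complement_progress_antimono[of 1 \<beta>]
      by (intro mult_mono) auto
    ultimately show ?thesis
      by (simp add: mult.commute)
  qed
  fix \<alpha> \<beta> :: real assume "\<alpha> \<in> {1..}" "\<beta> \<in> {1..}"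
  then show "dist (?\<phi> \<alpha>) (?\<phi> \<beta>) \<le> ?\<phi> 1 * dist \<alpha> \<beta>"
    using diff_le[of \<alpha> \<beta>] diff_le[of \<beta> \<alpha>]
    by (cases "\<alpha> \<le> \<beta>") (auto simp: dist_real_def abs_minus_commute)
qed (simp add: complement_progress_nonneg)

lemma progress_mono_on: "mono_on {0<..} (progress U z T)"
proof (rule mono_onI)
  fix \<alpha> \<beta> :: real assume "\<alpha> \<in> {0<..}" "\<beta> \<in> {0<..}" "\<alpha> \<le> \<beta>"
  then show "progress U z T \<alpha> \<le> progress U z T \<beta>"
    using progress_add_complement[of \<alpha>] progress_add_complement[of \<beta>]
      complement_progress_antimono[of \<alpha> \<beta>] by simp
qed

lemma progress_continuous_on: "continuous_on {1..} (progress U z T)"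
proof -
  have "progress U z T \<alpha> = real CARD('d) - complement_progress U z T \<alpha>" if "\<alpha> \<in> {1..}" for \<alpha>
    using progress_add_complement[of \<alpha>] that by simp
  then have "continuous_on {1..} (progress U z T)
      = continuous_on {1..} (\<lambda>\<alpha>. real CARD('d) - complement_progress U z T \<alpha>)"
    by (rule continuous_on_cong[OF refl])
  moreover have "continuous_on {1..} (\<lambda>\<alpha>. real CARD('d) - complement_progress U z T \<alpha>)"
    by (intro continuous_on_diff continuous_on_const
        lipschitz_on_continuous_on[OF complement_progress_lipschitz])
  ultimately show ?thesis
    by simp
qed

lemma inv_form_span_le:
  assumes "\<alpha> > 0" and b: "b = (\<Sum>j\<in>T. c$j *\<^sub>R column j U)"
  shows "inv_form \<alpha> b \<le> (\<Sum>j\<in>T. (c$j)\<^sup>2 / z$j) / \<alpha>"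
proof -
  interpret positive_definite "gram \<alpha>"
    using assms(1) by (rule positive_definite_scale_on)
  show ?thesis
  proof (rule inverse_quadratic_le)
    fix y
    let ?s = "\<lambda>j. column j U \<bullet> y"
    have "\<alpha> * (\<Sum>j\<in>T. z$j * (?s j)\<^sup>2) = (\<Sum>j\<in>T. scale_on T \<alpha> z $ j * (?s j)\<^sup>2)"
      by (simp add: sum_distrib_left scale_on_def mult.assoc)
    also have "\<dots> \<le> y \<bullet> (gram \<alpha> *v y)"
      unfolding quadratic_weighted_gram using zpos assms(1)
      by (intro sum_mono2) (auto simp: scale_on_def less_imp_le)
    finally have "2 * (b \<bullet> y) - y \<bullet> (gram \<alpha> *v y)
        \<le> (\<Sum>j\<in>T. 2 * (c$j * ?s j) - \<alpha> * (z$j * (?s j)\<^sup>2))"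
      by (simp add: b inner_sum_left sum_subtractf sum_distrib_left)
    also have "\<dots> \<le> (\<Sum>j\<in>T. (c$j)\<^sup>2 / z$j / \<alpha>)"
    proof (rule sum_mono)
      fix j
      have "z$j > 0"
        using zpos by simp
      then have "(c$j)\<^sup>2 / z$j / \<alpha> - (2 * (c$j * ?s j) - \<alpha> * (z$j * (?s j)\<^sup>2))
          = (c$j - \<alpha> * z$j * ?s j)\<^sup>2 / (\<alpha> * z$j)"
        using assms(1) by (simp add: field_simps power2_eq_square)
      also have "\<dots> \<ge> 0"
        using \<open>z$j > 0\<close> assms(1) by simp
      finally show "2 * (c$j * ?s j) - \<alpha> * (z$j * (?s j)\<^sup>2) \<le> (c$j)\<^sup>2 / z$j / \<alpha>"
        by simp
    qed
    finally show "2 * (b \<bullet> y) - y \<bullet> (gram \<alpha> *v y)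
        \<le> (\<Sum>j\<in>T. (c$j)\<^sup>2 / z$j) / \<alpha>"
      by (simp add: sum_divide_distrib)
  qed
qed

lemma trace_term_orthogonal_comp:
  assumes "\<alpha> > 0" and b: "b \<in> orthogonal_comp range_T"
  shows "trace_term \<alpha> b = b \<bullet> b"
proof -
  interpret positive_definite "gram \<alpha>"
    using assms(1) by (rule positive_definite_scale_on)
  have "column j U \<bullet> b = 0" if "j \<in> T" for j
    using b column_in_range_restrict_cols[OF that, where U = U]
    unfolding orthogonal_comp_def orthogonal_def by (blast intro: inner_commute)
  then have "gram 0 *v b = gram \<alpha> *v b"
    unfolding weighted_gram_mult_vec by (intro sum.cong) (auto simp: scale_on_def)
  then show ?thesis
    by (simp add: inverse_symmetric inverse_mult_cancel)
qed

lemma trace_term_range_tendsto: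
  assumes "b \<in> range_T"
  shows "((\<lambda>\<alpha>. trace_term \<alpha> b) \<longlongrightarrow> 0) at_top"
proof -
  obtain c where c: "b = (\<Sum>j\<in>T. c$j *\<^sub>R column j U)"
    using assms by (auto simp: restrict_cols_mult_vec)
  define C where "C = (\<Sum>j\<in>T. (c$j)\<^sup>2 / z$j) + inv_form 1 (gram 0 *v b)"
  have "norm (trace_term \<alpha> b) \<le> C / (2 * sqrt \<alpha>)" if "\<alpha> \<ge> 1" for \<alpha>
  proof -
    interpret positive_definite "gram \<alpha>"
      using that by (intro positive_definite_scale_on) simp
    have "2 * sqrt \<alpha> * \<bar>trace_term \<alpha> b\<bar>
        \<le> (sqrt \<alpha>)\<^sup>2 * inv_form \<alpha> b + inv_form \<alpha> (gram 0 *v b)"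
      by (rule inverse_bilinear_abs_le) (use that in simp)
    also have "\<dots> \<le> \<alpha> * ((\<Sum>j\<in>T. (c$j)\<^sup>2 / z$j) / \<alpha>) + inv_form 1 (gram 0 *v b)"
    proof (rule add_mono)
      show "(sqrt \<alpha>)\<^sup>2 * inv_form \<alpha> b \<le> \<alpha> * ((\<Sum>j\<in>T. (c$j)\<^sup>2 / z$j) / \<alpha>)"
        using that inv_form_span_le[OF _ c, of \<alpha>] by (simp add: le_divide_eq mult.commute)
      show "inv_form \<alpha> (gram 0 *v b) \<le> inv_form 1 (gram 0 *v b)"
        using that by (intro inv_form_antimono) auto
    qed
    also have "\<dots> = C"
      using that by (simp add: C_def)
    finally show ?thesis
      using that by (simp add: field_simps)
  qed
  then have "\<forall>\<^sub>F \<alpha> in at_top. norm (trace_term \<alpha> b) \<le> C / (2 * sqrt \<alpha>)"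
    by (rule eventually_at_top_linorderI)
  moreover have "((\<lambda>\<alpha>. C / (2 * sqrt \<alpha>)) \<longlongrightarrow> 0) at_top"
    by real_asymp
  ultimately show ?thesis
    by (rule Lim_null_comparison)
qed

lemma complement_progress_eq_trace:
  assumes "\<alpha> > 0" "finite E" "\<And>x. (\<Sum>b\<in>E. (x \<bullet> b) *\<^sub>R b) = x"
  shows "complement_progress U z T \<alpha> = (\<Sum>b\<in>E. trace_term \<alpha> b)"
proof -
  interpret positive_definite "gram \<alpha>"
    using assms(1) by (rule positive_definite_scale_on)
  have "complement_progress U z T \<alpha> = (\<Sum>j\<in>UNIV. scale_on T 0 z $ j * inv_form \<alpha> (column j U))"
    unfolding complement_progress_eq
    by (rule sum.mono_neutral_cong_right[symmetric]) (auto simp: scale_on_def)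
  also have "\<dots> = (\<Sum>b\<in>E. trace_term \<alpha> b)"
    by (rule sum_columns_eq_trace[OF assms(2,3) inverse_symmetric])
  finally show ?thesis .
qed

lemma complement_progress_tendsto:
  "(complement_progress U z T \<longlongrightarrow> real (dim (orthogonal_comp range_T))) at_top"
proof -
  obtain B C where fin: "finite B" "finite C" and disj: "B \<inter> C = {}" and "B \<subseteq> range_T"
    and C: "C \<subseteq> orthogonal_comp range_T" "card C = dim (orthogonal_comp range_T)"
      "\<And>b. b \<in> C \<Longrightarrow> b \<bullet> b = 1"
    and expand: "\<And>x. (\<Sum>b\<in>B \<union> C. (x \<bullet> b) *\<^sub>R b) = x"
    using orthonormal_basis_adapted[OF subspace_range_T] by blast
  have "complement_progress U z T \<alpha> = (\<Sum>b\<in>B. trace_term \<alpha> b) + real (card C)" if "\<alpha> > 0" for \<alpha>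
  proof -
    have "complement_progress U z T \<alpha> = (\<Sum>b\<in>B. trace_term \<alpha> b) + (\<Sum>b\<in>C. trace_term \<alpha> b)"
      using complement_progress_eq_trace[OF that _ expand] fin disj
      by (simp add: sum.union_disjoint)
    also have "(\<Sum>b\<in>C. trace_term \<alpha> b) = (\<Sum>b\<in>C. 1)"
      using C trace_term_orthogonal_comp[OF that] by (intro sum.cong) auto
    finally show ?thesis by simp
  qed
  then have "\<forall>\<^sub>F \<alpha> in at_top. (\<Sum>b\<in>B. trace_term \<alpha> b) + real (card C) = complement_progress U z T \<alpha>"
    by (intro eventually_at_top_linorderI[of 1]) simp
  moreover have "((\<lambda>\<alpha>. (\<Sum>b\<in>B. trace_term \<alpha> b) + real (card C)) \<longlongrightarrow> 0 + real (card C)) at_top"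
    using \<open>B \<subseteq> range_T\<close>
    by (intro tendsto_add tendsto_null_sum tendsto_const trace_term_range_tendsto) auto
  ultimately show ?thesis
    using C(2) by (simp add: tendsto_cong)
qed

lemma progress_tendsto: "(progress U z T \<longlongrightarrow> real (rank (restrict_cols U T))) at_top"
proof -
  have "real CARD('d) - real (dim (orthogonal_comp range_T)) = real (rank (restrict_cols U T))"
    using dim_orthogonal_comp[OF subspace_range_T] by (simp add: rank_dim_range)
  moreover have "((\<lambda>\<alpha>. real CARD('d) - complement_progress U z T \<alpha>)
      \<longlongrightarrow> real CARD('d) - real (dim (orthogonal_comp range_T))) at_top"
    by (intro tendsto_diff tendsto_const complement_progress_tendsto)
  moreover have "real CARD('d) - complement_progress U z T \<alpha> = progress U z T \<alpha>" if "\<alpha> \<ge> 1" for \<alpha>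
    using progress_add_complement[of \<alpha>] that by simp
  then have "\<forall>\<^sub>F \<alpha> in at_top. real CARD('d) - complement_progress U z T \<alpha> = progress U z T \<alpha>"
    by (rule eventually_at_top_linorderI)
  ultimately show ?thesis
    by (simp add: tendsto_cong)
qed

end

section \<open>The margin bound\<close>

lemma inner_ind_vec: "c \<bullet> ind_vec X = (\<Sum>j\<in>X. c$j)"
proof -
  have "c \<bullet> ind_vec X = (\<Sum>j\<in>UNIV. if j \<in> X then c$j else 0)"
    unfolding inner_vec_def ind_vec_def by (intro sum.cong) auto
  then show ?thesis
    by (simp add: sum.If_cases)
qed

lemma sum_le_neg_of_gap:
  fixes f :: "'a::finite \<Rightarrow> real"
  assumes sum0: "sum f UNIV = 0" and "T \<noteq> {}" "T \<noteq> UNIV" "0 \<le> \<gamma>"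
    and below: "\<And>j. j \<in> T \<Longrightarrow> f j \<le> \<nu> - \<gamma>" and above: "\<And>j. j \<notin> T \<Longrightarrow> \<nu> + \<gamma> \<le> f j"
  shows "sum f T \<le> - \<gamma>"
proof (cases "0 \<le> \<nu>")
  case True
  have "1 \<le> card (- T)"
    using \<open>T \<noteq> UNIV\<close> by (simp add: Suc_le_eq card_gt_0_iff) (use Compl_empty_eq in blast)
  then have "\<nu> + \<gamma> \<le> real (card (- T)) * (\<nu> + \<gamma>)"
    using True \<open>0 \<le> \<gamma>\<close> by (simp add: mult_le_cancel_right1)
  also have "\<dots> \<le> sum f (- T)"
    using above by (intro sum_bounded_below) auto
  also have "sum f (- T) = - sum f T"
    using sum0 sum.union_disjoint[of T "- T" f] by (simp add: Compl_partition)
  finally show ?thesis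
    using True by linarith
next
  case False
  have "1 \<le> card T"
    using \<open>T \<noteq> {}\<close> by (simp add: Suc_le_eq card_gt_0_iff)
  have "sum f T \<le> real (card T) * (\<nu> - \<gamma>)"
    using below by (intro sum_bounded_above) auto
  also have "\<dots> \<le> \<nu> - \<gamma>"
    using \<open>1 \<le> card T\<close> False \<open>0 \<le> \<gamma>\<close> by (simp add: mult_le_cancel_right2)
  finally show ?thesis
    using False by linarith
qed

lemma margin_feasible_le:
  assumes "margin_feasible U z c T \<gamma>" and "(\<Sum>j\<in>UNIV. lev U z j) = (\<Sum>j\<in>UNIV. c$j)"
    and "T \<noteq> {}" "T \<noteq> UNIV"
  shows "\<gamma> \<le> c \<bullet> ind_vec T - (\<Sum>j\<in>T. lev U z j)"
proof -
  define f where "f j = lev U z j - c$j" for j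
  obtain \<nu> where "0 \<le> \<gamma>" and max: "Max (f ` T) \<le> \<nu> - \<gamma>" and min: "\<nu> + \<gamma> \<le> Min (f ` (- T))"
    using assms(1) unfolding margin_feasible_def f_def by blast
  have "sum f T \<le> - \<gamma>"
  proof (rule sum_le_neg_of_gap[OF _ assms(3,4) \<open>0 \<le> \<gamma>\<close>])
    show "sum f UNIV = 0"
      using assms(2) by (simp add: f_def sum_subtractf)
    show "f j \<le> \<nu> - \<gamma>" if "j \<in> T" for j
    proof -
      have "f j \<le> Max (f ` T)"
        using that by (intro Max_ge) auto
      then show ?thesis
        using max by linarith
    qed
    show "\<nu> + \<gamma> \<le> f j" if "j \<notin> T" for j
    proof -
      have "Min (f ` (- T)) \<le> f j"
        using that by (intro Min_le) auto
      then show ?thesis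
        using min by linarith
    qed
  qed
  then show ?thesis
    by (simp add: f_def sum_subtractf inner_ind_vec)
qed

lemma IVT_at_top:
  fixes f :: "real \<Rightarrow> real"
  assumes cont: "continuous_on {a..} f" and lim: "(f \<longlongrightarrow> L) at_top" and "f a \<le> y" "y < L"
  shows "\<exists>x\<ge>a. f x = y"
proof -
  obtain N where N: "\<And>x. x \<ge> N \<Longrightarrow> y < f x"
    using order_tendstoD(1)[OF lim \<open>y < L\<close>] by (auto simp: eventually_at_top_linorder)
  define b where "b = max N a"
  have "continuous_on {a..b} f"
    using cont by (rule continuous_on_subset) auto
  moreover have "a \<le> b" "y \<le> f b"
    using N[of b] by (auto simp: b_def)
  ultimately obtain x where "a \<le> x" "x \<le> b" "f x = y"
    using IVT'[of f a y b] \<open>f a \<le> y\<close> by auto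
  then show ?thesis
    by auto
qed

theorem proposition2p13:
  fixes U :: "real^'n^'d" and z c :: "real^'n" and T :: "'n set"
  assumes frame: "is_frame U"
    and zpos: "\<forall>j. z $ j > 0"
    and cpos: "\<forall>j. c $ j > 0"
    and csum: "c \<bullet> ind_vec UNIV = real CARD('d)"
    and Tne: "T \<noteq> {}" and Tproper: "T \<noteq> UNIV"
  shows "mono_on {0<..} (progress U z T)
    \<and> ((progress U z T) \<longlongrightarrow> real (rank (restrict_cols U T))) at_top
    \<and> (\<forall>\<gamma>. is_margin U z c T \<gamma> \<longrightarrow> c \<bullet> ind_vec T - progress U z T 1 \<ge> \<gamma>)
    \<and> (real (rank (restrict_cols U T)) \<ge> c \<bullet> ind_vec T \<longrightarrow>
         (\<forall>\<gamma> \<delta>. is_margin U z c T \<gamma> \<longrightarrow> 0 \<le> \<delta> \<longrightarrow> \<delta> < \<gamma> \<longrightarrow>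
            (\<exists>\<alpha>\<ge>1. progress U z T \<alpha> = progress U z T 1 + \<delta>)))"
proof -
  have surj: "surj ((*v) U)"
    using frame by (simp add: is_frame_def full_rank_surjective)
  have margin: "\<gamma> \<le> c \<bullet> ind_vec T - progress U z T 1" if "is_margin U z c T \<gamma>" for \<gamma>
  proof -
    \<comment> \<open>Only \<open>\<Sum>\<^sub>j c\<^sub>j = d\<close> enters.\<close>
    have "(\<Sum>j\<in>UNIV. lev U z j) = (\<Sum>j\<in>UNIV. c$j)"
      using sum_lev[OF surj zpos] csum by (simp add: inner_ind_vec)
    then show ?thesis
      using margin_feasible_le[of U z c T \<gamma>] that Tne Tproper
      by (simp add: is_margin_def progress_eq_sum_lev)
  qed
  have "\<exists>\<alpha>\<ge>1. progress U z T \<alpha> = progress U z T 1 + \<delta>"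
    if "c \<bullet> ind_vec T \<le> real (rank (restrict_cols U T))" "is_margin U z c T \<gamma>" "0 \<le> \<delta>" "\<delta> < \<gamma>"
    for \<gamma> \<delta>
    using that margin[of \<gamma>]
    by (intro IVT_at_top[OF progress_continuous_on[OF surj zpos] progress_tendsto[OF surj zpos]])
       auto
  then show ?thesis
    using progress_mono_on[OF surj zpos] progress_tendsto[OF surj zpos] margin by blast
qed

end
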